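(* Order each hom-set $\mathbf{qPOS}((\mathcal X,R),(\mathcal Y,S))$ by $F\sqsubseteq G$ iff $G\le S\circ F$. Then this is a partial order on each hom-set, and composition is monotone in both arguments: if $F,F':(\mathcal X,R)\to(\mathcal Y,S)$ and $G,G':(\mathcal Y,S)\to(\mathcal Z,T)$ are monotone functions with $F\sqsubseteq F'$ and $G\sqsubseteq G'$, then $G\circ F\sqsubseteq G'\circ F'$. Thus $\mathbf{qPOS}$ is enriched over the category of posets.
   Context: A quantum set $\mathcal X$ is a set $\mathrm{At}(\mathcal X)$ of nonzero finite-dimensional Hilbert spaces (atoms). A relation $R$ from $\mathcal X$ to $\mathcal Y$ is a choice of subspaces $R(X,Y)\subseteq L(X,Y)$ for all atoms $X\in\mathrm{At}(\mathcal X)$, $Y\in\mathrm{At}(\mathcal Y)$. Composition: $(S\circ R)(X,Z)=\mathrm{span}\{sr: r\in R(X,Y), s\in S(Y,Z), Y\in\mathrm{At}(\mathcal Y)\}$; identity $I_{\mathcal X}(X,X)=\mathbb C 1_X$, $I_{\mathcal X}(X,X')=0$ for $X\neq X'$; adjoint $R^\dagger(Y,X)=\{r^\dagger: r\in R(X,Y)\}$; $R\le S$ iff $R(X,Y)\subseteq S(X,Y)$ for all atoms; $\wedge$ is entrywise intersection. A function $F:\mathcal X\to\mathcal Y$ is a relation with $F\circ F^\dagger\le I_{\mathcal Y}$ and $F^\dagger\circ F\ge I_{\mathcal X}$. A quantum poset is $(\mathcal X,R)$ with $I_{\mathcal X}\le R$, $R\circ R\le R$, $R\wedge R^\dagger\le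 I_{\mathcal X}$. A monotone map $F:(\mathcal X,R)\to(\mathcal Y,S)$ is a function $F:\mathcal X\to\mathcal Y$ with $F\circ R\le S\circ F$. $\mathbf{qPOS}$ is the category of quantum posets and monotone maps. *)

theory Defs
  imports "Jordan_Normal_Form.Schur_Decomposition"
begin

text \<open>A quantum set: a set of atom labels together with the dimension of each atom.
  The atom labelled a is the Hilbert space complex^(qdim X a); linear maps between
  atoms are complex matrices of the appropriate size.\<close>

record 'a qset =
  At :: "'a set"
  qdim :: "'a \<Rightarrow> nat"

definition qset_wf :: "'a qset \<Rightarrow> bool" where
  "qset_wf X \<longleftrightarrow> (\<forall>a\<in>At X. 0 < qdim X a)"

type_synonym ('a,'b) qrel = "'a \<Rightarrow> 'b \<Rightarrow> complex mat set"

definition msubspace :: "nat \<Rightarrow> nat \<Rightarrow> complex mat set \<Rightarrow> bool" where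
  "msubspace n m V \<longleftrightarrow> V \<subseteq> carrier_mat n m \<and> 0\<^sub>m n m \<in> V
     \<and> (\<forall>u\<in>V. \<forall>v\<in>V. u + v \<in> V) \<and> (\<forall>c. \<forall>u\<in>V. c \<cdot>\<^sub>m u \<in> V)"

inductive_set mspan :: "nat \<Rightarrow> nat \<Rightarrow> complex mat set \<Rightarrow> complex mat set"
  for n m A where
  zero: "0\<^sub>m n m \<in> mspan n m A"
| smult: "a \<in> A \<Longrightarrow> c \<cdot>\<^sub>m a \<in> mspan n m A"
| add: "u \<in> mspan n m A \<Longrightarrow> v \<in> mspan n m A \<Longrightarrow> u + v \<in> mspan n m A"

definition is_qrel :: "'a qset \<Rightarrow> 'b qset \<Rightarrow> ('a,'b) qrel \<Rightarrow> bool" where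
  "is_qrel X Y R \<longleftrightarrow> (\<forall>x\<in>At X. \<forall>y\<in>At Y. msubspace (qdim Y y) (qdim X x) (R x y))"

definition qcomp :: "'a qset \<Rightarrow> 'b qset \<Rightarrow> 'c qset \<Rightarrow> ('b,'c) qrel \<Rightarrow> ('a,'b) qrel \<Rightarrow> ('a,'c) qrel" where
  "qcomp X Y Z S R = (\<lambda>x z. mspan (qdim Z z) (qdim X x)
      {s * r | s r y. y \<in> At Y \<and> r \<in> R x y \<and> s \<in> S y z})"

definition qid :: "'a qset \<Rightarrow> ('a,'a) qrel" where
  "qid X = (\<lambda>x x'. if x = x' then {c \<cdot>\<^sub>m 1\<^sub>m (qdim X x) | c. True} else {0\<^sub>m (qdim X x') (qdim X x)})"

definition qadj :: "('a,'b) qrel \<Rightarrow> ('b,'a) qrel" where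
  "qadj R = (\<lambda>y x. mat_adjoint ` R x y)"

definition qle :: "'a qset \<Rightarrow> 'b qset \<Rightarrow> ('a,'b) qrel \<Rightarrow> ('a,'b) qrel \<Rightarrow> bool" where
  "qle X Y R S \<longleftrightarrow> (\<forall>x\<in>At X. \<forall>y\<in>At Y. R x y \<subseteq> S x y)"

definition qeq :: "'a qset \<Rightarrow> 'b qset \<Rightarrow> ('a,'b) qrel \<Rightarrow> ('a,'b) qrel \<Rightarrow> bool" where
  "qeq X Y R S \<longleftrightarrow> (\<forall>x\<in>At X. \<forall>y\<in>At Y. R x y = S x y)"

definition qmeet :: "('a,'b) qrel \<Rightarrow> ('a,'b) qrel \<Rightarrow> ('a,'b) qrel" where
  "qmeet R S = (\<lambda>x y. R x y \<inter> S x y)"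

definition qfun :: "'a qset \<Rightarrow> 'b qset \<Rightarrow> ('a,'b) qrel \<Rightarrow> bool" where
  "qfun X Y F \<longleftrightarrow> is_qrel X Y F
     \<and> qle Y Y (qcomp Y X Y F (qadj F)) (qid Y)
     \<and> qle X X (qid X) (qcomp X Y X (qadj F) F)"

definition qposet :: "'a qset \<Rightarrow> ('a,'a) qrel \<Rightarrow> bool" where
  "qposet X R \<longleftrightarrow> qset_wf X \<and> is_qrel X X R
     \<and> qle X X (qid X) R
     \<and> qle X X (qcomp X X X R R) R
     \<and> qle X X (qmeet R (qadj R)) (qid X)"

definition qmono :: "'a qset \<Rightarrow> ('a,'a) qrel \<Rightarrow> 'b qset \<Rightarrow> ('b,'b) qrel \<Rightarrow> ('a,'b) qrel \<Rightarrow> bool" where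
  "qmono X R Y S F \<longleftrightarrow> qfun X Y F \<and> qle X Y (qcomp X X Y F R) (qcomp X Y Y S F)"

definition qhom_le :: "'a qset \<Rightarrow> 'b qset \<Rightarrow> ('b,'b) qrel \<Rightarrow> ('a,'b) qrel \<Rightarrow> ('a,'b) qrel \<Rightarrow> bool" where
  "qhom_le X Y S F G \<longleftrightarrow> qle X Y G (qcomp X Y Y S F)"

end

theory Submission
  imports Defs
begin

text \<open>
  All four claims are inequalities in the ordered category of quantum relations, in which
  composition is associative, unital and monotone and the adjoint is a monotone involution
  reversing composition. Reflexivity of the hom-order is \<open>I \<le> S\<close>, transitivity is
  \<open>S \<circ> S \<le> S\<close>, and compatibility with composition uses \<open>G \<circ> S \<le> T \<circ> G\<close> for the
  monotone map \<open>G\<close> together with \<open>T \<circ> T \<le> T\<close>. For antisymmetry, \<open>G \<le> S \<circ> F\<close> and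
  \<open>F \<circ> F\<^sup>\<dagger> \<le> I\<close> give \<open>G \<circ> F\<^sup>\<dagger> \<le> S\<close>; symmetrically \<open>F \<circ> G\<^sup>\<dagger> \<le> S\<close>, whose adjoint is
  \<open>G \<circ> F\<^sup>\<dagger> \<le> S\<^sup>\<dagger>\<close>. Antisymmetry of \<open>S\<close> then yields \<open>G \<circ> F\<^sup>\<dagger> \<le> I\<close>, and so
  \<open>G \<le> G \<circ> F\<^sup>\<dagger> \<circ> F \<le> F\<close>.
\<close>

lemma dim_row_mat_adjoint [simp]: "dim_row (mat_adjoint A) = dim_col A"
  and dim_col_mat_adjoint [simp]: "dim_col (mat_adjoint A) = dim_row A"
  by (auto simp: mat_adjoint_def)

lemma index_mat_adjoint [simp]:
  "i < dim_col A \<Longrightarrow> j < dim_row A \<Longrightarrow> mat_adjoint A $$ (i, j) = conjugate (A $$ (j, i))"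
  by (auto simp: mat_adjoint_def mat_of_rows_index)

lemma mat_adjoint_adjoint [simp]: "mat_adjoint (mat_adjoint A) = A"
  by (rule eq_matI) auto

lemma mat_adjoint_zero [simp]: "mat_adjoint (0\<^sub>m n m :: 'a :: conjugatable_field mat) = 0\<^sub>m m n"
  by (rule eq_matI) auto

lemma mat_adjoint_smult: "mat_adjoint (c \<cdot>\<^sub>m (A :: complex mat)) = conjugate c \<cdot>\<^sub>m mat_adjoint A"
  by (rule eq_matI) auto

lemma mat_adjoint_add:
  "A \<in> carrier_mat n m \<Longrightarrow> B \<in> carrier_mat n m \<Longrightarrow>
   mat_adjoint (A + B :: complex mat) = mat_adjoint A + mat_adjoint B"
  by (rule eq_matI) auto

lemma mat_adjoint_mult:
  fixes A B :: "complex mat"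
  assumes "A \<in> carrier_mat n k" and "B \<in> carrier_mat k m"
  shows "mat_adjoint (A * B) = mat_adjoint B * mat_adjoint A"
  using assms
  by (intro eq_matI) (auto simp: scalar_prod_def, simp add: conjugate_complex_def cnj_sum mult.commute)

lemma smult_one_mat [simp]: "(1 :: 'a :: semiring_1) \<cdot>\<^sub>m A = A"
  by (rule eq_matI) auto

lemma mspan_carrier:
  assumes "A \<subseteq> carrier_mat n m" and "u \<in> mspan n m A"
  shows "u \<in> carrier_mat n m"
  using assms(2) by (induction rule: mspan.induct) (use assms(1) in auto)

lemma mspan_smult:
  assumes "A \<subseteq> carrier_mat n m" and "u \<in> mspan n m A"
  shows "c \<cdot>\<^sub>m u \<in> mspan n m A"
  using assms(2)
proof (induction rule: mspan.induct)
  case zero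
  then show ?case by (simp add: mspan.zero)
next
  case (smult a d)
  have "c \<cdot>\<^sub>m (d \<cdot>\<^sub>m a) = (c * d) \<cdot>\<^sub>m a" by (rule eq_matI) auto
  then show ?case using smult by (simp add: mspan.smult)
next
  case (add u v)
  have "c \<cdot>\<^sub>m (u + v) = c \<cdot>\<^sub>m u + c \<cdot>\<^sub>m v"
    using mspan_carrier[OF assms(1) add(1)] mspan_carrier[OF assms(1) add(2)]
    by (rule add_smult_distrib_left_mat)
  then show ?case using add by (simp add: mspan.add)
qed

lemma msubspace_mspan: "A \<subseteq> carrier_mat n m \<Longrightarrow> msubspace n m (mspan n m A)"
  unfolding msubspace_def by (auto intro: mspan.intros mspan_carrier mspan_smult)

lemma mspan_least: "A \<subseteq> V \<Longrightarrow> msubspace n m V \<Longrightarrow> mspan n m A \<subseteq> V"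
proof
  fix u assume "u \<in> mspan n m A" "A \<subseteq> V" "msubspace n m V"
  then show "u \<in> V" by (induction rule: mspan.induct) (auto simp: msubspace_def)
qed

lemma mspan_superset: "A \<subseteq> mspan n m A"
  using mspan.smult[of _ A 1] by auto

lemma mspan_mono: "A \<subseteq> B \<Longrightarrow> mspan n m A \<subseteq> mspan n m B"
proof
  fix u assume "u \<in> mspan n m A" "A \<subseteq> B"
  then show "u \<in> mspan n m B" by (induction rule: mspan.induct) (auto intro: mspan.intros)
qed

lemma mspan_mult_right_mem:
  assumes u: "u \<in> mspan n k A" and A: "A \<subseteq> carrier_mat n k" and r: "r \<in> carrier_mat k m"
    and W: "msubspace n m W" and gen: "\<And>a. a \<in> A \<Longrightarrow> a * r \<in> W"
  shows "u * r \<in> W"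
  using u
proof (induction rule: mspan.induct)
  case zero
  then show ?case using r W by (simp add: msubspace_def)
next
  case (smult a c)
  have "c \<cdot>\<^sub>m a * r = c \<cdot>\<^sub>m (a * r)" using A smult r by (auto intro: mult_smult_assoc_mat)
  then show ?case using gen[OF smult] W by (simp add: msubspace_def)
next
  case (add u v)
  have "(u + v) * r = u * r + v * r"
    using mspan_carrier[OF A add(1)] mspan_carrier[OF A add(2)] r by (simp add: add_mult_distrib_mat)
  then show ?case using add W by (simp add: msubspace_def)
qed

lemma mspan_mult_left_mem:
  assumes u: "u \<in> mspan k m A" and A: "A \<subseteq> carrier_mat k m" and s: "s \<in> carrier_mat n k"
    and W: "msubspace n m W" and gen: "\<And>a. a \<in> A \<Longrightarrow> s * a \<in> W"
  shows "s * u \<in> W"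
  using u
proof (induction rule: mspan.induct)
  case zero
  then show ?case using s W by (simp add: msubspace_def)
next
  case (smult a c)
  have "s * (c \<cdot>\<^sub>m a) = c \<cdot>\<^sub>m (s * a)" using A smult s by (auto intro: mult_smult_distrib)
  then show ?case using gen[OF smult] W by (simp add: msubspace_def)
next
  case (add u v)
  have "s * (u + v) = s * u + s * v"
    using mspan_carrier[OF A add(1)] mspan_carrier[OF A add(2)] s by (simp add: mult_add_distrib_mat)
  then show ?case using add W by (simp add: msubspace_def)
qed

lemma msubspace_image_mat_adjoint:
  fixes V :: "complex mat set"
  assumes V: "msubspace n m V"
  shows "msubspace m n (mat_adjoint ` V)"
proof -
  have carrier: "V \<subseteq> carrier_mat n m" using V by (simp add: msubspace_def)
  then have "mat_adjoint ` V \<subseteq> carrier_mat m n" by fastforce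
  moreover have "mat_adjoint a + mat_adjoint b \<in> mat_adjoint ` V" if "a \<in> V" "b \<in> V" for a b
  proof -
    have "mat_adjoint a + mat_adjoint b = mat_adjoint (a + b)"
      using that carrier by (simp add: mat_adjoint_add[of a n m b] subsetD)
    then show ?thesis using that V by (simp add: msubspace_def)
  qed
  moreover have "c \<cdot>\<^sub>m mat_adjoint a \<in> mat_adjoint ` V" if "a \<in> V" for a c
  proof -
    have "c \<cdot>\<^sub>m mat_adjoint a = mat_adjoint (conjugate c \<cdot>\<^sub>m a)" by (simp add: mat_adjoint_smult)
    then show ?thesis using that V by (simp add: msubspace_def)
  qed
  moreover have "0\<^sub>m m n \<in> mat_adjoint ` V"
    using V mat_adjoint_zero[of n m] unfolding msubspace_def by (metis image_eqI)
  ultimately show ?thesis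
    unfolding msubspace_def by blast
qed

lemma is_qrelD: "is_qrel X Y R \<Longrightarrow> x \<in> At X \<Longrightarrow> y \<in> At Y \<Longrightarrow> msubspace (qdim Y y) (qdim X x) (R x y)"
  by (simp add: is_qrel_def)

lemma is_qrel_carrier:
  "is_qrel X Y R \<Longrightarrow> x \<in> At X \<Longrightarrow> y \<in> At Y \<Longrightarrow> r \<in> R x y \<Longrightarrow> r \<in> carrier_mat (qdim Y y) (qdim X x)"
  unfolding is_qrel_def msubspace_def by blast

lemma qcomp_generator: "y \<in> At Y \<Longrightarrow> r \<in> R x y \<Longrightarrow> s \<in> S y z \<Longrightarrow> s * r \<in> qcomp X Y Z S R x z"
  unfolding qcomp_def by (rule subsetD[OF mspan_superset]) blast

lemma qcomp_generators_carrier: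
  "is_qrel X Y R \<Longrightarrow> is_qrel Y Z S \<Longrightarrow> x \<in> At X \<Longrightarrow> z \<in> At Z \<Longrightarrow>
   {s * r | s r y. y \<in> At Y \<and> r \<in> R x y \<and> s \<in> S y z} \<subseteq> carrier_mat (qdim Z z) (qdim X x)"
  using is_qrel_carrier[of X Y R] is_qrel_carrier[of Y Z S] by fastforce

lemma is_qrel_qcomp: "is_qrel X Y R \<Longrightarrow> is_qrel Y Z S \<Longrightarrow> is_qrel X Z (qcomp X Y Z S R)"
  unfolding is_qrel_def[of X Z] qcomp_def
  by (intro ballI msubspace_mspan qcomp_generators_carrier)

lemma qcomp_subset:
  assumes "msubspace (qdim Z z) (qdim X x) W"
    and "\<And>y r s. y \<in> At Y \<Longrightarrow> r \<in> R x y \<Longrightarrow> s \<in> S y z \<Longrightarrow> s * r \<in> W"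
  shows "qcomp X Y Z S R x z \<subseteq> W"
  unfolding qcomp_def by (rule mspan_least) (use assms in auto)

lemma qle_refl: "qle X Y A A"
  unfolding qle_def by blast

lemma qle_trans [trans]: "qle X Y A B \<Longrightarrow> qle X Y B C \<Longrightarrow> qle X Y A C"
  unfolding qle_def by blast

lemma qle_qmeet: "qle X Y A B \<Longrightarrow> qle X Y A C \<Longrightarrow> qle X Y A (qmeet B C)"
  unfolding qle_def qmeet_def by blast

lemma qle_antisym: "qle X Y A B \<Longrightarrow> qle X Y B A \<Longrightarrow> qeq X Y A B"
  unfolding qle_def qeq_def by blast

lemma qcomp_mono: "qle X Y R R' \<Longrightarrow> qle Y Z S S' \<Longrightarrow> qle X Z (qcomp X Y Z S R) (qcomp X Y Z S' R')"
  unfolding qle_def qcomp_def by (intro ballI mspan_mono) blast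

lemma qcomp_assoc_le:
  assumes R: "is_qrel X Y R" and S: "is_qrel Y Z S" and T: "is_qrel Z W T"
  shows "qle X W (qcomp X Y W (qcomp Y Z W T S) R) (qcomp X Z W T (qcomp X Y Z S R))"
  unfolding qle_def
proof (intro ballI)
  fix x w assume x: "x \<in> At X" and w: "w \<in> At W"
  have target: "msubspace (qdim W w) (qdim X x) (qcomp X Z W T (qcomp X Y Z S R) x w)"
    using is_qrelD[OF is_qrel_qcomp[OF is_qrel_qcomp[OF R S] T] x w] .
  show "qcomp X Y W (qcomp Y Z W T S) R x w \<subseteq> qcomp X Z W T (qcomp X Y Z S R) x w"
  proof (rule qcomp_subset[OF target])
    fix y r u assume y: "y \<in> At Y" and r: "r \<in> R x y" and u: "u \<in> qcomp Y Z W T S y w"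
    note r_carrier = is_qrel_carrier[OF R x y r]
    show "u * r \<in> qcomp X Z W T (qcomp X Y Z S R) x w"
    proof (rule mspan_mult_right_mem[OF _ qcomp_generators_carrier[OF S T y w] r_carrier target])
      show "u \<in> mspan (qdim W w) (qdim Y y) {t * s | t s z. z \<in> At Z \<and> s \<in> S y z \<and> t \<in> T z w}"
        using u by (simp add: qcomp_def)
    next
      fix a assume "a \<in> {t * s | t s z. z \<in> At Z \<and> s \<in> S y z \<and> t \<in> T z w}"
      then obtain t s z where a: "a = t * s" and z: "z \<in> At Z" and s: "s \<in> S y z" and t: "t \<in> T z w"
        by blast
      have "a * r = t * (s * r)"
        unfolding a using is_qrel_carrier[OF T z w t] is_qrel_carrier[OF S y z s] r_carrier
        by (rule assoc_mult_mat)
      then show "a * r \<in> qcomp X Z W T (qcomp X Y Z S R) x w"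
        using z t y r s by (metis qcomp_generator)
    qed
  qed
qed

lemma qcomp_assoc_ge:
  assumes R: "is_qrel X Y R" and S: "is_qrel Y Z S" and T: "is_qrel Z W T"
  shows "qle X W (qcomp X Z W T (qcomp X Y Z S R)) (qcomp X Y W (qcomp Y Z W T S) R)"
  unfolding qle_def
proof (intro ballI)
  fix x w assume x: "x \<in> At X" and w: "w \<in> At W"
  have target: "msubspace (qdim W w) (qdim X x) (qcomp X Y W (qcomp Y Z W T S) R x w)"
    using is_qrelD[OF is_qrel_qcomp[OF R is_qrel_qcomp[OF S T]] x w] .
  show "qcomp X Z W T (qcomp X Y Z S R) x w \<subseteq> qcomp X Y W (qcomp Y Z W T S) R x w"
  proof (rule qcomp_subset[OF target])
    fix z u t assume z: "z \<in> At Z" and u: "u \<in> qcomp X Y Z S R x z" and t: "t \<in> T z w"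
    note t_carrier = is_qrel_carrier[OF T z w t]
    show "t * u \<in> qcomp X Y W (qcomp Y Z W T S) R x w"
    proof (rule mspan_mult_left_mem[OF _ qcomp_generators_carrier[OF R S x z] t_carrier target])
      show "u \<in> mspan (qdim Z z) (qdim X x) {s * r | s r y. y \<in> At Y \<and> r \<in> R x y \<and> s \<in> S y z}"
        using u by (simp add: qcomp_def)
    next
      fix a assume "a \<in> {s * r | s r y. y \<in> At Y \<and> r \<in> R x y \<and> s \<in> S y z}"
      then obtain s r y where a: "a = s * r" and y: "y \<in> At Y" and r: "r \<in> R x y" and s: "s \<in> S y z"
        by blast
      have "t * a = (t * s) * r"
        unfolding a using t_carrier is_qrel_carrier[OF S y z s] is_qrel_carrier[OF R x y r]
        by (rule assoc_mult_mat[symmetric])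
      then show "t * a \<in> qcomp X Y W (qcomp Y Z W T S) R x w"
        using z t y r s by (metis qcomp_generator)
    qed
  qed
qed

lemma qid_elem_cases:
  assumes "i \<in> qid X x x'"
  obtains c where "x' = x" and "i = c \<cdot>\<^sub>m 1\<^sub>m (qdim X x)"
  | "x' \<noteq> x" and "i = 0\<^sub>m (qdim X x') (qdim X x)"
  using assms unfolding qid_def by (auto split: if_splits)

lemma one_mat_mem_qid: "1\<^sub>m (qdim X x) \<in> qid X x x"
  unfolding qid_def by (auto intro!: exI[of _ 1])

lemma qcomp_qid_right_le:
  assumes R: "is_qrel X Y R"
  shows "qle X Y (qcomp X X Y R (qid X)) R"
  unfolding qle_def
proof (intro ballI qcomp_subset[OF is_qrelD[OF R]])
  fix x y x' i r assume x: "x \<in> At X" and y: "y \<in> At Y" and x': "x' \<in> At X"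
    and i: "i \<in> qid X x x'" and r: "r \<in> R x' y"
  have V: "msubspace (qdim Y y) (qdim X x) (R x y)" using is_qrelD[OF R x y] .
  note r_carrier = is_qrel_carrier[OF R x' y r]
  from i show "r * i \<in> R x y"
  proof (cases rule: qid_elem_cases)
    case (1 c)
    then have "r * i = c \<cdot>\<^sub>m r"
      using r_carrier mult_smult_distrib[OF r_carrier one_carrier_mat, of c] by simp
    then show ?thesis using V r 1 by (simp add: msubspace_def)
  next
    case 2
    then have "r * i = 0\<^sub>m (qdim Y y) (qdim X x)" using r_carrier by simp
    then show ?thesis using V by (simp add: msubspace_def)
  qed
qed

lemma qcomp_qid_left_le:
  assumes R: "is_qrel X Y R"
  shows "qle X Y (qcomp X Y Y (qid Y) R) R"
  unfolding qle_def
proof (intro ballI qcomp_subset[OF is_qrelD[OF R]])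
  fix x y y' r i assume x: "x \<in> At X" and y: "y \<in> At Y" and y': "y' \<in> At Y"
    and r: "r \<in> R x y'" and i: "i \<in> qid Y y' y"
  have V: "msubspace (qdim Y y) (qdim X x) (R x y)" using is_qrelD[OF R x y] .
  note r_carrier = is_qrel_carrier[OF R x y' r]
  from i show "i * r \<in> R x y"
  proof (cases rule: qid_elem_cases)
    case (1 c)
    then have "i * r = c \<cdot>\<^sub>m r"
      using r_carrier mult_smult_assoc_mat[OF one_carrier_mat r_carrier, of c] by simp
    then show ?thesis using V r 1 by (simp add: msubspace_def)
  next
    case 2
    then have "i * r = 0\<^sub>m (qdim Y y) (qdim X x)" using r_carrier by simp
    then show ?thesis using V by (simp add: msubspace_def)
  qed
qed

lemma qcomp_qid_right_ge:
  assumes R: "is_qrel X Y R"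
  shows "qle X Y R (qcomp X X Y R (qid X))"
  unfolding qle_def
proof (intro ballI subsetI)
  fix x y r assume x: "x \<in> At X" and y: "y \<in> At Y" and r: "r \<in> R x y"
  have "r * 1\<^sub>m (qdim X x) = r" using is_qrel_carrier[OF R x y r] by simp
  then show "r \<in> qcomp X X Y R (qid X) x y"
    using x r by (metis qcomp_generator one_mat_mem_qid)
qed

lemma qcomp_qid_left_ge:
  assumes R: "is_qrel X Y R"
  shows "qle X Y R (qcomp X Y Y (qid Y) R)"
  unfolding qle_def
proof (intro ballI subsetI)
  fix x y r assume x: "x \<in> At X" and y: "y \<in> At Y" and r: "r \<in> R x y"
  have "1\<^sub>m (qdim Y y) * r = r" using is_qrel_carrier[OF R x y r] by simp
  then show "r \<in> qcomp X Y Y (qid Y) R x y"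
    using y r by (metis qcomp_generator one_mat_mem_qid)
qed

lemma is_qrel_qadj: "is_qrel X Y R \<Longrightarrow> is_qrel Y X (qadj R)"
  unfolding is_qrel_def qadj_def by (blast intro: msubspace_image_mat_adjoint)

lemma qadj_mono: "qle X Y R R' \<Longrightarrow> qle Y X (qadj R) (qadj R')"
  unfolding qle_def qadj_def by blast

lemma qadj_qadj_ge: "qle X Y R (qadj (qadj R))"
  unfolding qle_def qadj_def by (simp add: image_image)

lemma qcomp_qadj_le:
  assumes R: "is_qrel X Y R" and S: "is_qrel Y Z S"
  shows "qle Z X (qcomp Z Y X (qadj R) (qadj S)) (qadj (qcomp X Y Z S R))"
  unfolding qle_def
proof (intro ballI)
  fix z x assume z: "z \<in> At Z" and x: "x \<in> At X"
  show "qcomp Z Y X (qadj R) (qadj S) z x \<subseteq> qadj (qcomp X Y Z S R) z x"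
  proof (rule qcomp_subset[OF is_qrelD[OF is_qrel_qadj[OF is_qrel_qcomp[OF R S]] z x]])
    fix y s' r' assume y: "y \<in> At Y" and s': "s' \<in> qadj S z y" and r': "r' \<in> qadj R y x"
    obtain s where s: "s \<in> S y z" "s' = mat_adjoint s" using s' unfolding qadj_def by auto
    obtain r where r: "r \<in> R x y" "r' = mat_adjoint r" using r' unfolding qadj_def by auto
    have "r' * s' = mat_adjoint (s * r)"
      using mat_adjoint_mult[OF is_qrel_carrier[OF S y z s(1)] is_qrel_carrier[OF R x y r(1)]] r s
      by simp
    then show "r' * s' \<in> qadj (qcomp X Y Z S R) z x"
      unfolding qadj_def using y r s by (blast intro: qcomp_generator)
  qed
qed

lemma qhom_le_refl:
  assumes F: "is_qrel X Y F" and S_refl: "qle Y Y (qid Y) S"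
  shows "qhom_le X Y S F F"
proof -
  have "qle X Y F (qcomp X Y Y (qid Y) F)" by (rule qcomp_qid_left_ge[OF F])
  also have "qle X Y \<dots> (qcomp X Y Y S F)" by (rule qcomp_mono[OF qle_refl S_refl])
  finally show ?thesis unfolding qhom_le_def .
qed

lemma qhom_le_trans:
  assumes F: "is_qrel X Y F" and S: "is_qrel Y Y S" and S_trans: "qle Y Y (qcomp Y Y Y S S) S"
    and FG: "qhom_le X Y S F G" and GH: "qhom_le X Y S G H"
  shows "qhom_le X Y S F H"
proof -
  have "qle X Y H (qcomp X Y Y S G)" using GH unfolding qhom_le_def .
  also have "qle X Y \<dots> (qcomp X Y Y S (qcomp X Y Y S F))"
    using FG unfolding qhom_le_def by (rule qcomp_mono[OF _ qle_refl])
  also have "qle X Y \<dots> (qcomp X Y Y (qcomp Y Y Y S S) F)" by (rule qcomp_assoc_ge[OF F S S])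
  also have "qle X Y \<dots> (qcomp X Y Y S F)" by (rule qcomp_mono[OF qle_refl S_trans])
  finally show ?thesis unfolding qhom_le_def .
qed

lemma qcomp_qadj_le_of_qhom_le:
  assumes S: "is_qrel Y Y S" and F: "qfun X Y F" and FG: "qhom_le X Y S F G"
  shows "qle Y Y (qcomp Y X Y G (qadj F)) S"
proof -
  have F_rel: "is_qrel X Y F" and F_coiso: "qle Y Y (qcomp Y X Y F (qadj F)) (qid Y)"
    using F by (auto simp: qfun_def)
  have "qle Y Y (qcomp Y X Y G (qadj F)) (qcomp Y X Y (qcomp X Y Y S F) (qadj F))"
    using FG unfolding qhom_le_def by (rule qcomp_mono[OF qle_refl])
  also have "qle Y Y \<dots> (qcomp Y Y Y S (qcomp Y X Y F (qadj F)))"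
    by (rule qcomp_assoc_le[OF is_qrel_qadj[OF F_rel] F_rel S])
  also have "qle Y Y \<dots> (qcomp Y Y Y S (qid Y))" by (rule qcomp_mono[OF F_coiso qle_refl])
  also have "qle Y Y \<dots> S" by (rule qcomp_qid_right_le[OF S])
  finally show ?thesis .
qed

lemma qle_of_qhom_le_qhom_le:
  assumes S: "is_qrel Y Y S" and S_antisym: "qle Y Y (qmeet S (qadj S)) (qid Y)"
    and F: "qfun X Y F" and G: "qfun X Y G"
    and FG: "qhom_le X Y S F G" and GF: "qhom_le X Y S G F"
  shows "qle X Y G F"
proof -
  have F_rel: "is_qrel X Y F" and F_iso: "qle X X (qid X) (qcomp X Y X (qadj F) F)"
    and G_rel: "is_qrel X Y G"
    using F G by (auto simp: qfun_def)
  have "qle Y Y (qcomp Y X Y G (qadj F)) (qadj (qcomp Y X Y F (qadj G)))"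
    using qcomp_mono[OF qle_refl qadj_qadj_ge] qcomp_qadj_le[OF is_qrel_qadj[OF G_rel] F_rel]
    by (rule qle_trans)
  also have "qle Y Y \<dots> (qadj S)"
    by (rule qadj_mono[OF qcomp_qadj_le_of_qhom_le[OF S G GF]])
  finally have "qle Y Y (qcomp Y X Y G (qadj F)) (qid Y)"
    using qle_trans[OF qle_qmeet[OF qcomp_qadj_le_of_qhom_le[OF S F FG]] S_antisym] by blast
  then have GF_le: "qle X Y (qcomp X Y Y (qcomp Y X Y G (qadj F)) F) F"
    using qle_trans[OF qcomp_mono[OF qle_refl] qcomp_qid_left_le[OF F_rel]] by blast
  have "qle X Y G (qcomp X X Y G (qid X))" by (rule qcomp_qid_right_ge[OF G_rel])
  also have "qle X Y \<dots> (qcomp X X Y G (qcomp X Y X (qadj F) F))"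
    by (rule qcomp_mono[OF F_iso qle_refl])
  also have "qle X Y \<dots> (qcomp X Y Y (qcomp Y X Y G (qadj F)) F)"
    by (rule qcomp_assoc_ge[OF F_rel is_qrel_qadj[OF F_rel] G_rel])
  also have "qle X Y \<dots> F" by (rule GF_le)
  finally show ?thesis .
qed

lemma qhom_le_antisym:
  assumes S: "is_qrel Y Y S" and S_antisym: "qle Y Y (qmeet S (qadj S)) (qid Y)"
    and F: "qfun X Y F" and G: "qfun X Y G"
    and FG: "qhom_le X Y S F G" and GF: "qhom_le X Y S G F"
  shows "qeq X Y F G"
  using qle_of_qhom_le_qhom_le[OF S S_antisym G F GF FG] qle_of_qhom_le_qhom_le[OF S S_antisym F G FG GF]
  by (rule qle_antisym)

lemma qhom_le_qcomp:
  assumes F: "is_qrel X Y F" and G: "is_qrel Y Z G" and S: "is_qrel Y Y S" and T: "is_qrel Z Z T"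
    and G_mono: "qle Y Z (qcomp Y Y Z G S) (qcomp Y Z Z T G)"
    and T_trans: "qle Z Z (qcomp Z Z Z T T) T"
    and FF': "qhom_le X Y S F F'" and GG': "qhom_le Y Z T G G'"
  shows "qhom_le X Z T (qcomp X Y Z G F) (qcomp X Y Z G' F')"
proof -
  have SF: "is_qrel X Y (qcomp X Y Y S F)" using is_qrel_qcomp[OF F S] .
  have GF: "is_qrel X Z (qcomp X Y Z G F)" using is_qrel_qcomp[OF F G] .
  have "qle X Z (qcomp X Y Z G' F') (qcomp X Y Z (qcomp Y Z Z T G) (qcomp X Y Y S F))"
    using FF' GG' unfolding qhom_le_def by (rule qcomp_mono)
  also have "qle X Z \<dots> (qcomp X Z Z T (qcomp X Y Z G (qcomp X Y Y S F)))"
    by (rule qcomp_assoc_le[OF SF G T])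
  also have "qle X Z \<dots> (qcomp X Z Z T (qcomp X Y Z (qcomp Y Y Z G S) F))"
    by (rule qcomp_mono[OF qcomp_assoc_ge[OF F S G] qle_refl])
  also have "qle X Z \<dots> (qcomp X Z Z T (qcomp X Y Z (qcomp Y Z Z T G) F))"
    by (rule qcomp_mono[OF qcomp_mono[OF qle_refl G_mono] qle_refl])
  also have "qle X Z \<dots> (qcomp X Z Z T (qcomp X Z Z T (qcomp X Y Z G F)))"
    by (rule qcomp_mono[OF qcomp_assoc_le[OF F G T] qle_refl])
  also have "qle X Z \<dots> (qcomp X Z Z (qcomp Z Z Z T T) (qcomp X Y Z G F))"
    by (rule qcomp_assoc_ge[OF GF T T])
  also have "qle X Z \<dots> (qcomp X Z Z T (qcomp X Y Z G F))"
    by (rule qcomp_mono[OF qle_refl T_trans])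
  finally show ?thesis unfolding qhom_le_def .
qed

theorem mainTheorem2:
  fixes X :: "'x qset" and Y :: "'y qset" and Z :: "'z qset"
    and R :: "('x,'x) qrel" and S :: "('y,'y) qrel" and T :: "('z,'z) qrel"
  assumes PX: "qposet X R" and PY: "qposet Y S" and PZ: "qposet Z T"
  shows "(\<forall>F. qmono X R Y S F \<longrightarrow> qhom_le X Y S F F)
    \<and> (\<forall>F G H. qmono X R Y S F \<longrightarrow> qmono X R Y S G \<longrightarrow> qmono X R Y S H \<longrightarrow>
          qhom_le X Y S F G \<longrightarrow> qhom_le X Y S G H \<longrightarrow> qhom_le X Y S F H)
    \<and> (\<forall>F G. qmono X R Y S F \<longrightarrow> qmono X R Y S G \<longrightarrow>
          qhom_le X Y S F G \<longrightarrow> qhom_le X Y S G F \<longrightarrow> qeq X Y F G)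
    \<and> (\<forall>F F' G G'. qmono X R Y S F \<longrightarrow> qmono X R Y S F' \<longrightarrow>
          qmono Y S Z T G \<longrightarrow> qmono Y S Z T G' \<longrightarrow>
          qhom_le X Y S F F' \<longrightarrow> qhom_le Y Z T G G' \<longrightarrow>
          qhom_le X Z T (qcomp X Y Z G F) (qcomp X Y Z G' F'))"
proof -
  have S: "is_qrel Y Y S" and S_refl: "qle Y Y (qid Y) S" and S_trans: "qle Y Y (qcomp Y Y Y S S) S"
    and S_antisym: "qle Y Y (qmeet S (qadj S)) (qid Y)"
    using PY by (auto simp: qposet_def)
  have T: "is_qrel Z Z T" and T_trans: "qle Z Z (qcomp Z Z Z T T) T"
    using PZ by (auto simp: qposet_def)
  have qmono_qfun: "qfun A B H" if "qmono A P B Q H" for A B P Q and H :: "('a, 'b) qrel"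
    using that by (simp add: qmono_def)
  have qmono_is_qrel: "is_qrel A B H" if "qmono A P B Q H" for A B P Q and H :: "('a, 'b) qrel"
    using that by (simp add: qmono_def qfun_def)
  show ?thesis
  proof (intro conjI allI impI)
    show "qhom_le X Y S F F" if "qmono X R Y S F" for F
      using qhom_le_refl[OF qmono_is_qrel[OF that] S_refl] .
    show "qhom_le X Y S F H" if "qmono X R Y S F" "qhom_le X Y S F G" "qhom_le X Y S G H" for F G H
      using qhom_le_trans[OF qmono_is_qrel[OF that(1)] S S_trans that(2,3)] .
    show "qeq X Y F G" if "qmono X R Y S F" "qmono X R Y S G" "qhom_le X Y S F G" "qhom_le X Y S G F"
      for F G
      using qhom_le_antisym[OF S S_antisym qmono_qfun[OF that(1)] qmono_qfun[OF that(2)] that(3,4)] .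
    show "qhom_le X Z T (qcomp X Y Z G F) (qcomp X Y Z G' F')"
      if "qmono X R Y S F" "qmono Y S Z T G" "qhom_le X Y S F F'" "qhom_le Y Z T G G'" for F F' G G'
      using qhom_le_qcomp[OF qmono_is_qrel[OF that(1)] qmono_is_qrel[OF that(2)] S T _ T_trans that(3,4)]
        that(2) by (simp add: qmono_def)
  qed
qed

end
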